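(* Let $G$ be a unit square graph and let $u,v\in V(G)$ be distinct non-adjacent vertices. Then $G[N(u)\cap N(v)]$ is a unit interval graph, and $N(u)\cap N(v)$ contains no independent set of size three.
   Context: A unit square graph is a graph $G$ admitting $f\colon V(G)\to\mathbb{R}^2$ with $vw\in E(G)$ iff $\|f(v)-f(w)\|_\infty\le1$ for distinct $v,w$. A unit interval graph is an intersection graph of unit-length intervals on the real line. *)

theory Defs
  imports Complex_Main
begin

definition simple_graph :: "'a set \<Rightarrow> ('a \<Rightarrow> 'a \<Rightarrow> bool) \<Rightarrow> bool" where
  "simple_graph V E \<longleftrightarrow>
     (\<forall>v w. E v w \<longrightarrow> v \<in> V \<and> w \<in> V) \<and>
     (\<forall>v w. E v w \<longrightarrow> E w v) \<and> (\<forall>v. \<not> E v v)"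

definition dist_inf :: "real \<times> real \<Rightarrow> real \<times> real \<Rightarrow> real" where
  "dist_inf p q = max \<bar>fst p - fst q\<bar> \<bar>snd p - snd q\<bar>"

definition unit_square_graph :: "'a set \<Rightarrow> ('a \<Rightarrow> 'a \<Rightarrow> bool) \<Rightarrow> bool" where
  "unit_square_graph V E \<longleftrightarrow> simple_graph V E \<and>
     (\<exists>f :: 'a \<Rightarrow> real \<times> real. \<forall>v\<in>V. \<forall>w\<in>V. v \<noteq> w \<longrightarrow>
        (E v w \<longleftrightarrow> dist_inf (f v) (f w) \<le> 1))"

definition unit_interval_graph :: "'a set \<Rightarrow> ('a \<Rightarrow> 'a \<Rightarrow> bool) \<Rightarrow> bool" where
  "unit_interval_graph V E \<longleftrightarrow> simple_graph V E \<and>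
     (\<exists>a :: 'a \<Rightarrow> real. \<forall>v\<in>V. \<forall>w\<in>V. v \<noteq> w \<longrightarrow>
        (E v w \<longleftrightarrow> {a v..a v + 1} \<inter> {a w..a w + 1} \<noteq> {}))"

definition nbhd :: "'a set \<Rightarrow> ('a \<Rightarrow> 'a \<Rightarrow> bool) \<Rightarrow> 'a \<Rightarrow> 'a set" where
  "nbhd V E u = {w \<in> V. E u w}"

definition induced_edges :: "('a \<Rightarrow> 'a \<Rightarrow> bool) \<Rightarrow> 'a set \<Rightarrow> 'a \<Rightarrow> 'a \<Rightarrow> bool" where
  "induced_edges E S = (\<lambda>x y. E x y \<and> x \<in> S \<and> y \<in> S)"

definition independent_set :: "('a \<Rightarrow> 'a \<Rightarrow> bool) \<Rightarrow> 'a set \<Rightarrow> bool" where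
  "independent_set E I \<longleftrightarrow> (\<forall>x\<in>I. \<forall>y\<in>I. \<not> E x y)"

end

theory Submission
  imports Defs
begin

text \<open>Every common neighbour w of u and v has f(w) in the intersection of the two closed
  sup-norm unit balls around f(u) and f(v). As u and v are non-adjacent, f(u) and f(v) are
  more than 1 apart in some coordinate, so in that coordinate the intersection has width
  less than 1. Hence adjacency among common neighbours is decided by the other coordinate
  alone, which is a unit interval representation; and all common neighbours lie within 1
  of f(u) in that coordinate, an interval of length 2 that cannot hold three points at
  pairwise distance more than 1.\<close>

lemma unit_intervals_intersect_iff:
  "{a..a + 1} \<inter> {b..b + 1::real} \<noteq> {} \<longleftrightarrow> \<bar>a - b\<bar> \<le> 1"
proof
  assume "{a..a + 1} \<inter> {b..b + 1::real} \<noteq> {}"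
  then show "\<bar>a - b\<bar> \<le> 1" by auto
next
  assume "\<bar>a - b\<bar> \<le> 1"
  then have "max a b \<in> {a..a + 1} \<inter> {b..b + 1}" by (auto simp: max_def)
  then show "{a..a + 1} \<inter> {b..b + 1::real} \<noteq> {}" by blast
qed

lemma dist_le_one_if_near_far_pair:
  fixes a b x y :: real
  assumes "1 < \<bar>a - b\<bar>" "\<bar>x - a\<bar> \<le> 1" "\<bar>x - b\<bar> \<le> 1" "\<bar>y - a\<bar> \<le> 1" "\<bar>y - b\<bar> \<le> 1"
  shows "\<bar>x - y\<bar> \<le> 1"
  using assms by (auto simp: abs_if split: if_splits)

lemma no_three_far_apart_near_point:
  fixes c x y z :: real
  assumes "\<bar>x - c\<bar> \<le> 1" "\<bar>y - c\<bar> \<le> 1" "\<bar>z - c\<bar> \<le> 1"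
  shows "\<bar>x - y\<bar> \<le> 1 \<or> \<bar>y - z\<bar> \<le> 1 \<or> \<bar>x - z\<bar> \<le> 1"
  using assms by (auto simp: abs_if split: if_splits)

lemma unit_interval_graph_induced:
  fixes a :: "'a \<Rightarrow> real"
  assumes "simple_graph V E"
    and "\<forall>w\<in>S. \<forall>w'\<in>S. w \<noteq> w' \<longrightarrow> (E w w' \<longleftrightarrow> \<bar>a w - a w'\<bar> \<le> 1)"
  shows "unit_interval_graph S (induced_edges E S)"
  unfolding unit_interval_graph_def
proof
  show "simple_graph S (induced_edges E S)"
    using assms(1) by (auto simp: simple_graph_def induced_edges_def)
  show "\<exists>b :: 'a \<Rightarrow> real. \<forall>v\<in>S. \<forall>w\<in>S. v \<noteq> w \<longrightarrow>
      (induced_edges E S v w \<longleftrightarrow> {b v..b v + 1} \<inter> {b w..b w + 1} \<noteq> {})"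
    by (rule exI[of _ a]) (use assms(2) in \<open>auto simp: induced_edges_def unit_intervals_intersect_iff\<close>)
qed

lemma no_independent_triple:
  fixes a :: "'a \<Rightarrow> real"
  assumes "\<forall>w\<in>S. \<forall>w'\<in>S. w \<noteq> w' \<longrightarrow> (E w w' \<longleftrightarrow> \<bar>a w - a w'\<bar> \<le> 1)"
    and "\<forall>w\<in>S. \<bar>a w - c\<bar> \<le> 1"
  shows "\<not> (\<exists>I \<subseteq> S. card I = 3 \<and> independent_set E I)"
proof
  assume "\<exists>I \<subseteq> S. card I = 3 \<and> independent_set E I"
  then obtain x y z where "{x, y, z} \<subseteq> S" "x \<noteq> y" "y \<noteq> z" "x \<noteq> z"
    and "independent_set E {x, y, z}"
    by (auto simp: card_3_iff)
  then have "\<not> \<bar>a x - a y\<bar> \<le> 1" "\<not> \<bar>a y - a z\<bar> \<le> 1" "\<not> \<bar>a x - a z\<bar> \<le> 1"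
    using assms(1) by (auto simp: independent_set_def)
  moreover have "\<bar>a x - c\<bar> \<le> 1" "\<bar>a y - c\<bar> \<le> 1" "\<bar>a z - c\<bar> \<le> 1"
    using assms(2) \<open>{x, y, z} \<subseteq> S\<close> by auto
  ultimately show False
    using no_three_far_apart_near_point[of "a x" c "a y" "a z"] by blast
qed

lemma common_nbhd_adjacency_by_coordinate:
  fixes X Y :: "'a \<Rightarrow> real"
  assumes sg: "simple_graph V E"
    and edge: "\<forall>w\<in>V. \<forall>w'\<in>V. w \<noteq> w' \<longrightarrow>
                 (E w w' \<longleftrightarrow> max \<bar>X w - X w'\<bar> \<bar>Y w - Y w'\<bar> \<le> 1)"
    and "u \<in> V" "v \<in> V" and far: "1 < \<bar>X u - X v\<bar>"
  defines "S \<equiv> nbhd V E u \<inter> nbhd V E v"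
  shows "\<forall>w\<in>S. \<forall>w'\<in>S. w \<noteq> w' \<longrightarrow> (E w w' \<longleftrightarrow> \<bar>Y w - Y w'\<bar> \<le> 1)"
    and "\<forall>w\<in>S. \<bar>Y w - Y u\<bar> \<le> 1"
proof -
  have near: "w \<in> V \<and> \<bar>X w - X u\<bar> \<le> 1 \<and> \<bar>X w - X v\<bar> \<le> 1 \<and> \<bar>Y w - Y u\<bar> \<le> 1"
    if "w \<in> S" for w
  proof -
    have "w \<in> V" "E u w" "E v w" using that by (auto simp: S_def nbhd_def)
    moreover from this have "w \<noteq> u" "w \<noteq> v" using sg by (auto simp: simple_graph_def)
    ultimately show ?thesis
      using edge \<open>u \<in> V\<close> \<open>v \<in> V\<close> by (auto simp: abs_minus_commute)
  qed
  show "\<forall>w\<in>S. \<forall>w'\<in>S. w \<noteq> w' \<longrightarrow> (E w w' \<longleftrightarrow> \<bar>Y w - Y w'\<bar> \<le> 1)"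
  proof (intro ballI impI)
    fix w w' assume "w \<in> S" "w' \<in> S" "w \<noteq> w'"
    have "\<bar>X w - X w'\<bar> \<le> 1"
      using dist_le_one_if_near_far_pair[OF far] near[OF \<open>w \<in> S\<close>] near[OF \<open>w' \<in> S\<close>] by blast
    then show "E w w' \<longleftrightarrow> \<bar>Y w - Y w'\<bar> \<le> 1"
      using edge near[OF \<open>w \<in> S\<close>] near[OF \<open>w' \<in> S\<close>] \<open>w \<noteq> w'\<close> by auto
  qed
  show "\<forall>w\<in>S. \<bar>Y w - Y u\<bar> \<le> 1" using near by blast
qed

lemma unit_square_common_nbhd_interval_coordinate:
  assumes "unit_square_graph V E" "u \<in> V" "v \<in> V" "u \<noteq> v" "\<not> E u v"
  obtains a :: "'a \<Rightarrow> real" where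
    "\<forall>w\<in>nbhd V E u \<inter> nbhd V E v. \<forall>w'\<in>nbhd V E u \<inter> nbhd V E v.
       w \<noteq> w' \<longrightarrow> (E w w' \<longleftrightarrow> \<bar>a w - a w'\<bar> \<le> 1)"
    "\<forall>w\<in>nbhd V E u \<inter> nbhd V E v. \<bar>a w - a u\<bar> \<le> 1"
proof -
  obtain f :: "'a \<Rightarrow> real \<times> real" where sg: "simple_graph V E"
    and edge: "\<forall>w\<in>V. \<forall>w'\<in>V. w \<noteq> w' \<longrightarrow> (E w w' \<longleftrightarrow> dist_inf (f w) (f w') \<le> 1)"
    using assms(1) unfolding unit_square_graph_def by blast
  have "1 < dist_inf (f u) (f v)" using edge assms(2-5) by force
  then consider "1 < \<bar>fst (f u) - fst (f v)\<bar>" | "1 < \<bar>snd (f u) - snd (f v)\<bar>"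
    by (auto simp: dist_inf_def less_max_iff_disj)
  then show thesis
  proof cases
    case 1
    have "\<forall>w\<in>V. \<forall>w'\<in>V. w \<noteq> w' \<longrightarrow>
        (E w w' \<longleftrightarrow> max \<bar>fst (f w) - fst (f w')\<bar> \<bar>snd (f w) - snd (f w')\<bar> \<le> 1)"
      using edge by (simp add: dist_inf_def)
    from common_nbhd_adjacency_by_coordinate[OF sg this assms(2,3) 1] show thesis by (rule that)
  next
    case 2
    have "\<forall>w\<in>V. \<forall>w'\<in>V. w \<noteq> w' \<longrightarrow>
        (E w w' \<longleftrightarrow> max \<bar>snd (f w) - snd (f w')\<bar> \<bar>fst (f w) - fst (f w')\<bar> \<le> 1)"
      using edge by (simp add: dist_inf_def max.commute)
    from common_nbhd_adjacency_by_coordinate[OF sg this assms(2,3) 2] show thesis by (rule that)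
  qed
qed

theorem mainTheorem6:
  fixes V :: "'a set" and E :: "'a \<Rightarrow> 'a \<Rightarrow> bool" and u v :: 'a
  assumes "finite V"
    and "unit_square_graph V E"
    and "u \<in> V" and "v \<in> V" and "u \<noteq> v" and "\<not> E u v"
  shows "unit_interval_graph (nbhd V E u \<inter> nbhd V E v)
           (induced_edges E (nbhd V E u \<inter> nbhd V E v))
         \<and> \<not> (\<exists>I \<subseteq> nbhd V E u \<inter> nbhd V E v. card I = 3 \<and> independent_set E I)"
proof -
  have sg: "simple_graph V E" using assms(2) by (simp add: unit_square_graph_def)
  obtain a :: "'a \<Rightarrow> real" where
    adj: "\<forall>w\<in>nbhd V E u \<inter> nbhd V E v. \<forall>w'\<in>nbhd V E u \<inter> nbhd V E v.
       w \<noteq> w' \<longrightarrow> (E w w' \<longleftrightarrow> \<bar>a w - a w'\<bar> \<le> 1)"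
    and near: "\<forall>w\<in>nbhd V E u \<inter> nbhd V E v. \<bar>a w - a u\<bar> \<le> 1"
    by (rule unit_square_common_nbhd_interval_coordinate[OF assms(2-6)])
  show ?thesis
    using unit_interval_graph_induced[OF sg adj] no_independent_triple[OF adj near] by (rule conjI)
qed

end
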